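(* Let $w:=3/\sqrt{2}$ and define, for $q\in(0,1)$ and $t\in[0,w]$, $$\theta_5(q,t):=\sum_{j=0}^{5}q^{j(j+1)/2}(-t+wi)^j,\qquad \theta_*(q,t):=\sum_{j=6}^{\infty}q^{j(j+1)/2}(-t+wi)^j.$$ Then for all $(q,t)\in[0.3,0.6]\times[0,w]$ one has $|\theta_*(q,t)|\leq 0.018$ and $\mathrm{Im}(\theta_5(q,t))>0.13$. Consequently, for $(q,t)\in[0.3,0.6]\times[0,w]$, $\theta(q,-t+wi)\neq 0$, where $\theta(q,x):=\sum_{j=0}^{\infty}q^{j(j+1)/2}x^j$. *)

theory Defs
  imports "HOL-Analysis.Analysis"
begin

definition w :: real where "w = 3 / sqrt 2"

definition zpt :: "real \<Rightarrow> complex" where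
  "zpt t = Complex (- t) w"

definition theta :: "real \<Rightarrow> complex \<Rightarrow> complex" where
  "theta q x = (\<Sum>j. complex_of_real (q ^ (j * (j + 1) div 2)) * x ^ j)"

definition theta5 :: "real \<Rightarrow> real \<Rightarrow> complex" where
  "theta5 q t = (\<Sum>j\<le>5. complex_of_real (q ^ (j * (j + 1) div 2)) * zpt t ^ j)"

definition theta_star :: "real \<Rightarrow> real \<Rightarrow> complex" where
  "theta_star q t = (\<Sum>j. complex_of_real (q ^ ((j + 6) * (j + 7) div 2)) * zpt t ^ (j + 6))"

end

theory Submission
  imports Defs
begin

text \<open>
  Since w^2 = 9/2, the imaginary part of (-t + w i)^j is w times a polynomial in t with rational
  coefficients, so Im (theta5 q t) = w g(q, t) for an explicit rational polynomial g. On the box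
  [3/10, 3/5] \<times> [0, 17/8], which contains the region since w < 17/8, g is decreasing in t and
  g(q, 17/8) \<ge> 0.0613; hence Im (theta5 q t) > 2.121 \<cdot> 0.0613 > 0.13. Both polynomial
  inequalities are verified by bisecting the box: on each piece the polynomial is bounded below by
  its value at the upper corner minus first-order corrections, where the partial derivatives are
  bounded above by evaluating every monomial at its worst corner.

  For the tail, (j + 6)(j + 7)/2 \<ge> 21 + 7j and |-t + w i| \<le> 3 dominate theta_star by a
  geometric series: |theta_star q t| \<le> (3/5)^21 3^6 / (1 - 3 (3/5)^7) < 0.018. Then
  Im (theta q (-t + w i)) = Im (theta5 q t) + Im (theta_star q t) > 0.13 - 0.018 > 0.
\<close>

type_synonym bipoly = "(real \<times> nat \<times> nat) list"

definition bipoly_eval :: "bipoly \<Rightarrow> real \<Rightarrow> real \<Rightarrow> real" where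
  "bipoly_eval p x y = (\<Sum>(k, i, j) \<leftarrow> p. k * x ^ i * y ^ j)"

definition bipoly_neg :: "bipoly \<Rightarrow> bipoly" where
  "bipoly_neg p = map (\<lambda>(k, i, j). (- k, i, j)) p"

definition bipoly_dx :: "bipoly \<Rightarrow> bipoly" where
  "bipoly_dx p = map (\<lambda>(k, i, j). (k * real i, i - 1, j)) p"

definition bipoly_dy :: "bipoly \<Rightarrow> bipoly" where
  "bipoly_dy p = map (\<lambda>(k, i, j). (k * real j, i, j - 1)) p"

definition bipoly_box_upper :: "bipoly \<Rightarrow> real \<Rightarrow> real \<Rightarrow> real \<Rightarrow> real \<Rightarrow> real" where
  "bipoly_box_upper p a b c d =
     (\<Sum>(k, i, j) \<leftarrow> p. if 0 \<le> k then k * b ^ i * d ^ j else k * a ^ i * c ^ j)"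

definition bipoly_box_lower :: "bipoly \<Rightarrow> real \<Rightarrow> real \<Rightarrow> real \<Rightarrow> real \<Rightarrow> real" where
  "bipoly_box_lower p a b c d = bipoly_eval p b d
     - (b - a) * max (bipoly_box_upper (bipoly_dx p) a b c d) 0
     - (d - c) * max (bipoly_box_upper (bipoly_dy p) a b c d) 0"

lemma bipoly_eval_neg: "bipoly_eval (bipoly_neg p) x y = - bipoly_eval p x y"
  by (induction p) (auto simp: bipoly_eval_def bipoly_neg_def)

lemma bipoly_DERIV_x:
  "((\<lambda>x. bipoly_eval p x y) has_real_derivative bipoly_eval (bipoly_dx p) x y) (at x)"
  by (induction p) (auto simp: bipoly_eval_def bipoly_dx_def intro!: derivative_eq_intros)

lemma bipoly_DERIV_y:
  "((\<lambda>y. bipoly_eval p x y) has_real_derivative bipoly_eval (bipoly_dy p) x y) (at y)"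
  by (induction p) (auto simp: bipoly_eval_def bipoly_dy_def intro!: derivative_eq_intros)

lemma bipoly_eval_le_box_upper:
  assumes "0 \<le> a" "a \<le> x" "x \<le> b" "0 \<le> c" "c \<le> y" "y \<le> d"
  shows "bipoly_eval p x y \<le> bipoly_box_upper p a b c d"
proof (induction p)
  case Nil
  then show ?case by (simp add: bipoly_eval_def bipoly_box_upper_def)
next
  case (Cons m p)
  obtain k i j where m: "m = (k, i, j)" by (cases m)
  have "a ^ i * c ^ j \<le> x ^ i * y ^ j" "x ^ i * y ^ j \<le> b ^ i * d ^ j"
    using assms by (auto intro!: mult_mono power_mono)
  then have "k * x ^ i * y ^ j \<le> (if 0 \<le> k then k * b ^ i * d ^ j else k * a ^ i * c ^ j)"
    by (auto simp: mult.assoc intro: mult_left_mono mult_left_mono_neg)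
  with Cons show ?case by (simp add: m bipoly_eval_def bipoly_box_upper_def)
qed

lemma increment_le_of_DERIV_le:
  fixes f f' :: "real \<Rightarrow> real"
  assumes "x \<le> b"
    and "\<And>z. x \<le> z \<Longrightarrow> z \<le> b \<Longrightarrow> (f has_real_derivative f' z) (at z)"
    and "\<And>z. x \<le> z \<Longrightarrow> z \<le> b \<Longrightarrow> f' z \<le> U"
  shows "f b - f x \<le> (b - x) * U"
proof -
  have "U * x - f x \<le> U * b - f b"
  proof (rule DERIV_nonneg_imp_nondecreasing[OF \<open>x \<le> b\<close>])
    fix z assume "x \<le> z" "z \<le> b"
    with assms show "\<exists>D. ((\<lambda>z. U * z - f z) has_real_derivative D) (at z) \<and> 0 \<le> D"
      by (intro exI[of _ "U - f' z"]) (auto intro!: derivative_eq_intros)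
  qed
  then show ?thesis by (simp add: algebra_simps)
qed

lemma bipoly_box_lower_le_eval:
  assumes "0 \<le> a" "a \<le> x" "x \<le> b" "0 \<le> c" "c \<le> y" "y \<le> d"
  shows "bipoly_box_lower p a b c d \<le> bipoly_eval p x y"
proof -
  define Ux where "Ux = bipoly_box_upper (bipoly_dx p) a b c d"
  define Uy where "Uy = bipoly_box_upper (bipoly_dy p) a b c d"
  have "bipoly_eval p b d - bipoly_eval p x d \<le> (b - x) * Ux"
    unfolding Ux_def using assms
    by (intro increment_le_of_DERIV_le[OF _ bipoly_DERIV_x] bipoly_eval_le_box_upper) auto
  moreover have "bipoly_eval p x d - bipoly_eval p x y \<le> (d - y) * Uy"
    unfolding Uy_def using assms
    by (intro increment_le_of_DERIV_le[OF _ bipoly_DERIV_y] bipoly_eval_le_box_upper) auto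
  moreover have "(b - x) * Ux \<le> (b - a) * max Ux 0" "(d - y) * Uy \<le> (d - c) * max Uy 0"
    using assms by (auto intro!: order_trans[OF mult_left_mono mult_right_mono])
  ultimately show ?thesis
    unfolding bipoly_box_lower_def Ux_def[symmetric] Uy_def[symmetric] by linarith
qed

datatype bisection = Leaf | Bisect_x bisection bisection | Bisect_y bisection bisection

fun bipoly_certified :: "bipoly \<Rightarrow> real \<Rightarrow> bisection \<Rightarrow> real \<Rightarrow> real \<Rightarrow> real \<Rightarrow> real \<Rightarrow> bool" where
  "bipoly_certified p m Leaf a b c d \<longleftrightarrow> m \<le> bipoly_box_lower p a b c d"
| "bipoly_certified p m (Bisect_x l r) a b c d \<longleftrightarrow>
     bipoly_certified p m l a ((a + b) / 2) c d \<and> bipoly_certified p m r ((a + b) / 2) b c d"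
| "bipoly_certified p m (Bisect_y l r) a b c d \<longleftrightarrow>
     bipoly_certified p m l a b c ((c + d) / 2) \<and> bipoly_certified p m r a b ((c + d) / 2) d"

lemma bipoly_certified_imp_le:
  assumes "bipoly_certified p m T a b c d"
    and "0 \<le> a" "a \<le> x" "x \<le> b" "0 \<le> c" "c \<le> y" "y \<le> d"
  shows "m \<le> bipoly_eval p x y"
  using assms
proof (induction T arbitrary: a b c d)
  case Leaf
  then show ?case using bipoly_box_lower_le_eval[of a x b c y d p] by simp
next
  case (Bisect_x l r)
  then show ?case by (cases "x \<le> (a + b) / 2") auto
next
  case (Bisect_y l r)
  then show ?case by (cases "y \<le> (c + d) / 2") auto
qed

lemma bipoly_eval_antimono_y:
  assumes "bipoly_certified (bipoly_neg (bipoly_dy p)) 0 T a b c d"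
    and "0 \<le> a" "a \<le> x" "x \<le> b" "0 \<le> c" "c \<le> y" "y \<le> y'" "y' \<le> d"
  shows "bipoly_eval p x y' \<le> bipoly_eval p x y"
proof -
  have "bipoly_eval p x y' - bipoly_eval p x y \<le> (y' - y) * 0"
  proof (rule increment_le_of_DERIV_le[OF \<open>y \<le> y'\<close> bipoly_DERIV_y])
    fix z assume "y \<le> z" "z \<le> y'"
    with assms have "0 \<le> bipoly_eval (bipoly_neg (bipoly_dy p)) x z"
      by (intro bipoly_certified_imp_le[OF assms(1)]) auto
    then show "bipoly_eval (bipoly_dy p) x z \<le> 0" by (simp add: bipoly_eval_neg)
  qed
  then show ?thesis by simp
qed

lemma w_squared: "w\<^sup>2 = 9 / 2"
  by (simp add: w_def power_divide)

lemma w_bounds: "2121 / 1000 \<le> w" "w \<le> 17 / 8"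
proof -
  have "0 < w" by (simp add: w_def)
  moreover have "(2121 / 1000)\<^sup>2 \<le> w\<^sup>2" "w\<^sup>2 \<le> (17 / 8 :: real)\<^sup>2"
    by (simp_all add: w_squared power_divide)
  ultimately show "2121 / 1000 \<le> w" "w \<le> 17 / 8"
    by (auto simp: power2_le_iff_abs_le abs_le_square_iff)
qed

text \<open>The monomial (k, i, j) stands for k q^i t^j; the coefficient of q^(j(j+1)/2) is
  Im (-t + w i)^j / w, reduced with w^2 = 9/2.\<close>

definition im_theta5_poly :: bipoly where
  "im_theta5_poly = [(1, 1, 0), (-2, 3, 1), (3, 6, 2), (-9/2, 6, 0), (18, 10, 1), (-4, 10, 3),
     (5, 15, 4), (-45, 15, 2), (81/4, 15, 0)]"

lemma Im_theta5_eq: "Im (theta5 q t) = w * bipoly_eval im_theta5_poly q t"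
proof -
  have "{..5::nat} = {0, 1, 2, 3, 4, 5}" by auto
  then have "theta5 q t = 1 + q * zpt t + q ^ 3 * zpt t ^ 2 + q ^ 6 * zpt t ^ 3
      + q ^ 10 * zpt t ^ 4 + q ^ 15 * zpt t ^ 5"
    by (simp add: theta5_def)
  moreover have "z ^ 2 = z * z" "z ^ 3 = z * z * z" "z ^ 4 = z * z * z * z"
    "z ^ 5 = z * z * z * z * z" for z :: complex
    by (simp_all add: eval_nat_numeral mult.assoc)
  ultimately have "Im (theta5 q t) = q * w - 2 * t * w * q ^ 3 + (3 * t\<^sup>2 * w - w ^ 3) * q ^ 6
     + (4 * t * w ^ 3 - 4 * t ^ 3 * w) * q ^ 10 + (5 * t ^ 4 * w - 10 * t\<^sup>2 * w ^ 3 + w ^ 5) * q ^ 15"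
    by (simp add: zpt_def complex_mult) (simp add: algebra_simps power2_eq_square eval_nat_numeral)
  also have "\<dots> = w * bipoly_eval im_theta5_poly q t"
  proof -
    have "w ^ 3 = w\<^sup>2 * w" "w ^ 5 = (w\<^sup>2)\<^sup>2 * w"
      by (simp_all add: eval_nat_numeral)
    then have w_powers: "w ^ 3 = 9 / 2 * w" "w ^ 5 = 81 / 4 * w"
      by (simp_all add: w_squared power_divide)
    show ?thesis
      unfolding w_powers by (simp add: im_theta5_poly_def bipoly_eval_def algebra_simps)
  qed
  finally show ?thesis .
qed

text \<open>The bisection trees were computed outside the logic; simp evaluates the bounds at their leaves.\<close>

lemma im_theta5_poly_antimono_certificate:
  "bipoly_certified (bipoly_neg (bipoly_dy im_theta5_poly)) 0
     (Bisect_x (Bisect_x Leaf (Bisect_x Leaf Leaf)) (Bisect_x (Bisect_x Leaf (Bisect_x Leaf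
      Leaf)) (Bisect_x (Bisect_x (Bisect_x Leaf Leaf) (Bisect_x Leaf Leaf)) (Bisect_x (Bisect_y
      Leaf (Bisect_x Leaf (Bisect_x Leaf Leaf))) (Bisect_y Leaf (Bisect_y Leaf (Bisect_x Leaf
      Leaf)))))))
     (3/10) (3/5) 0 (17/8)"
  by (simp add: im_theta5_poly_def bipoly_box_lower_def bipoly_box_upper_def bipoly_eval_def
      bipoly_dx_def bipoly_dy_def bipoly_neg_def power_divide)

lemma im_theta5_poly_top_edge_certificate:
  "bipoly_certified im_theta5_poly (613/10000)
     (Bisect_x (Bisect_x Leaf Leaf) (Bisect_x (Bisect_x Leaf (Bisect_x Leaf Leaf)) (Bisect_x
      (Bisect_x Leaf (Bisect_x Leaf Leaf)) (Bisect_x (Bisect_x Leaf Leaf) (Bisect_x (Bisect_x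
      Leaf Leaf) (Bisect_x Leaf Leaf))))))
     (3/10) (3/5) (17/8) (17/8)"
  by (simp add: im_theta5_poly_def bipoly_box_lower_def bipoly_box_upper_def bipoly_eval_def
      bipoly_dx_def bipoly_dy_def power_divide)

lemma im_theta5_poly_lower_bound:
  assumes "3/10 \<le> q" "q \<le> 3/5" "0 \<le> t" "t \<le> 17/8"
  shows "613/10000 \<le> bipoly_eval im_theta5_poly q t"
proof -
  have "613/10000 \<le> bipoly_eval im_theta5_poly q (17/8)"
    by (rule bipoly_certified_imp_le[OF im_theta5_poly_top_edge_certificate]) (use assms in auto)
  also have "\<dots> \<le> bipoly_eval im_theta5_poly q t"
    by (rule bipoly_eval_antimono_y[OF im_theta5_poly_antimono_certificate]) (use assms in auto)
  finally show ?thesis .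
qed

lemma Im_theta5_gt:
  assumes "3/10 \<le> q" "q \<le> 3/5" "0 \<le> t" "t \<le> w"
  shows "13/100 < Im (theta5 q t)"
proof -
  have "13/100 < (2121/1000) * (613/10000 :: real)" by simp
  also have "\<dots> \<le> w * bipoly_eval im_theta5_poly q t"
    using w_bounds assms by (intro mult_mono im_theta5_poly_lower_bound) auto
  finally show ?thesis by (simp add: Im_theta5_eq)
qed

lemma triangular_shift_ge:
  fixes n j :: nat
  shows "n * (n + 1) div 2 + (n + 1) * j \<le> (j + n) * (j + n + 1) div 2"
proof -
  have "2 * (n * (n + 1) div 2) = n * (n + 1)" by simp
  moreover have "n * (n + 1) + 2 * ((n + 1) * j) \<le> (j + n) * (j + n + 1)"
    by (simp add: algebra_simps)
  ultimately show ?thesis by linarith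
qed

lemma theta_tail_term_norm_le:
  fixes z :: complex
  assumes "0 \<le> q" "q \<le> r" "r \<le> 1" "cmod z \<le> R"
  shows "cmod (complex_of_real (q ^ ((j + n) * (j + n + 1) div 2)) * z ^ (j + n))
           \<le> r ^ (n * (n + 1) div 2) * R ^ n * (r ^ (n + 1) * R) ^ j"
proof -
  have "q ^ ((j + n) * (j + n + 1) div 2) \<le> r ^ ((j + n) * (j + n + 1) div 2)"
    using assms by (intro power_mono) auto
  also have "\<dots> \<le> r ^ (n * (n + 1) div 2 + (n + 1) * j)"
    using assms by (intro power_decreasing triangular_shift_ge) auto
  finally have "q ^ ((j + n) * (j + n + 1) div 2) * cmod z ^ (j + n)
      \<le> r ^ (n * (n + 1) div 2 + (n + 1) * j) * R ^ (j + n)"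
    using assms by (intro mult_mono power_mono) auto
  also have "\<dots> = r ^ (n * (n + 1) div 2) * R ^ n * (r ^ (n + 1) * R) ^ j"
    by (simp add: power_add power_mult_distrib mult_ac flip: power_mult)
  finally show ?thesis
    using assms by (simp add: norm_mult norm_power)
qed

lemma theta_tail_summable_norm_le:
  fixes z :: complex
  assumes "0 \<le> q" "q \<le> r" "r \<le> 1" "cmod z \<le> R" "r ^ (n + 1) * R < 1"
  shows "summable (\<lambda>j. complex_of_real (q ^ ((j + n) * (j + n + 1) div 2)) * z ^ (j + n))"
    and "cmod (\<Sum>j. complex_of_real (q ^ ((j + n) * (j + n + 1) div 2)) * z ^ (j + n))
           \<le> r ^ (n * (n + 1) div 2) * R ^ n / (1 - r ^ (n + 1) * R)"
proof -
  have "0 \<le> R" using assms(4) norm_ge_zero order_trans by blast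
  then have "norm (r ^ (n + 1) * R) < 1" using assms by simp
  then have geometric: "(\<lambda>j. r ^ (n * (n + 1) div 2) * R ^ n * (r ^ (n + 1) * R) ^ j)
      sums (r ^ (n * (n + 1) div 2) * R ^ n / (1 - r ^ (n + 1) * R))"
    using sums_mult[OF geometric_sums] by fastforce
  note term_le = theta_tail_term_norm_le[OF assms(1-4)]
  show "summable (\<lambda>j. complex_of_real (q ^ ((j + n) * (j + n + 1) div 2)) * z ^ (j + n))"
    using summable_comparison_test'[OF sums_summable[OF geometric] term_le] .
  show "cmod (\<Sum>j. complex_of_real (q ^ ((j + n) * (j + n + 1) div 2)) * z ^ (j + n))
      \<le> r ^ (n * (n + 1) div 2) * R ^ n / (1 - r ^ (n + 1) * R)"
    using norm_suminf_le[OF term_le sums_summable[OF geometric]] sums_unique[OF geometric] by simp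
qed

lemma theta_split_initial_segment:
  assumes "summable (\<lambda>j. complex_of_real (q ^ ((j + n) * (j + n + 1) div 2)) * z ^ (j + n))"
  shows "theta q z = (\<Sum>j<n. complex_of_real (q ^ (j * (j + 1) div 2)) * z ^ j)
      + (\<Sum>j. complex_of_real (q ^ ((j + n) * (j + n + 1) div 2)) * z ^ (j + n))"
proof -
  define f where "f = (\<lambda>j. complex_of_real (q ^ (j * (j + 1) div 2)) * z ^ j)"
  have "summable f"
    using assms summable_iff_shift[of f n] by (simp add: f_def)
  then have "suminf f = (\<Sum>j. f (j + n)) + (\<Sum>j<n. f j)"
    by (rule suminf_split_initial_segment)
  then show ?thesis by (simp add: theta_def f_def add.commute)
qed

lemma norm_zpt_le:
  assumes "0 \<le> t" "t \<le> w"
  shows "cmod (zpt t) \<le> 3"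
proof -
  have "t\<^sup>2 + w\<^sup>2 \<le> 3\<^sup>2"
    using assms power_mono[of t w 2] by (simp add: w_squared)
  then show ?thesis
    by (simp add: zpt_def cmod_def real_le_lsqrt)
qed

lemma theta_star_summable_norm_le:
  assumes "0 \<le> q" "q \<le> 3/5" "0 \<le> t" "t \<le> w"
  shows "summable (\<lambda>j. complex_of_real (q ^ ((j + 6) * (j + 7) div 2)) * zpt t ^ (j + 6))"
    and "cmod (theta_star q t) \<le> 18/1000"
proof -
  have seven: "j + 6 + 1 = j + 7" for j :: nat by simp
  have "(3/5 :: real) \<le> 1" "(3/5 :: real) ^ (6 + 1) * 3 < 1" by (simp_all add: power_divide)
  note tail = theta_tail_summable_norm_le[OF assms(1,2) this(1) norm_zpt_le[OF assms(3,4)] this(2),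
      unfolded seven, folded theta_star_def]
  show "summable (\<lambda>j. complex_of_real (q ^ ((j + 6) * (j + 7) div 2)) * zpt t ^ (j + 6))"
    by (fact tail(1))
  have "(3/5 :: real) ^ (6 * (6 + 1) div 2) * 3 ^ 6 / (1 - (3/5) ^ (6 + 1) * 3) \<le> 18/1000"
    by (simp add: power_divide)
  with tail(2) show "cmod (theta_star q t) \<le> 18/1000" by simp
qed

lemma theta_zpt_eq_theta5_plus_theta_star:
  assumes "0 \<le> q" "q \<le> 3/5" "0 \<le> t" "t \<le> w"
  shows "theta q (zpt t) = theta5 q t + theta_star q t"
proof -
  have seven: "j + 6 + 1 = j + 7" for j :: nat by simp
  have "{..<6::nat} = {..5}" by auto
  then show ?thesis
    using theta_split_initial_segment[of q 6 "zpt t", unfolded seven, folded theta_star_def,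
        OF theta_star_summable_norm_le(1)[OF assms]]
    by (simp add: theta5_def)
qed

theorem lemma7:
  fixes q t :: real
  assumes "0.3 \<le> q" "q \<le> 0.6" "0 \<le> t" "t \<le> w"
  shows "cmod (theta_star q t) \<le> 0.018 \<and> Im (theta5 q t) > 0.13
         \<and> theta q (Complex (- t) w) \<noteq> 0"
proof -
  have q: "3/10 \<le> q" "q \<le> 3/5" using assms(1,2) by simp_all
  then have q_nonneg: "0 \<le> q" by simp
  have tail: "cmod (theta_star q t) \<le> 18/1000"
    by (rule theta_star_summable_norm_le(2)[OF q_nonneg q(2) assms(3,4)])
  have main: "13/100 < Im (theta5 q t)"
    by (rule Im_theta5_gt[OF q assms(3,4)])
  have "- cmod (theta_star q t) \<le> Im (theta_star q t)"
    using abs_Im_le_cmod[of "theta_star q t"] by linarith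
  with tail main have "0 < Im (theta q (zpt t))"
    by (simp add: theta_zpt_eq_theta5_plus_theta_star[OF q_nonneg q(2) assms(3,4)])
  then have "theta q (Complex (- t) w) \<noteq> 0" by (auto simp: zpt_def)
  with tail main show ?thesis by simp
qed

end
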